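(* Assume $\bm\lambda\neq0$ and $\bm\mu\neq0$. For every $d\in\mathbb C$, the quotient $L(d,\bm\lambda,\bm\mu)=M_1(\bm\lambda,\bm\mu)/N_d$ is an irreducible $\widehat{\mathfrak{gl}}$-module (no nonzero proper subspace is invariant under all $E_{i,j}$); consequently it is also an irreducible module for $\mathcal W_{1+\infty,c=-1}\cong M^0$.
   Context: Let $\widehat{\mathcal A}$ be the Weyl algebra: the unital associative complex algebra generated by $a(r),a^*(r)$ ($r\in\mathbb Z$) with relations $[a(r),a(s)]=[a^*(r),a^*(s)]=0$ and $[a(r),a^*(s)]=\delta_{r+s,0}$. Fix integers $n\ge 0$, $m\ge 1$, $\bm\lambda=(\lambda_0,\dots,\lambda_n)\in\mathbb C^{n+1}$, $\bm\mu=(\mu_1,\dots,\mu_m)\in\mathbb C^m$, and set $\lambda_i=0$ for $i>n$, $\mu_j=0$ for $j>m$. The Whittaker module $M_1(\bm\lambda,\bm\mu)=\widehat{\mathcal A}/\mathcal I$, where $\mathcal I$ is the left ideal generated by $a(i)-\lambda_i$ ($i\ge 0$) and $a^*(j)-\mu_j$ ($j\ge 1$); $w=w_{\bm\lambda,\bm\mu}$ denotes the image of $1$. Normal ordering: $:a(i)a^*(j):$ equals $a^*(j)a(i)$ if $i\ge 0$ and $j\le 0$, and equals $a(i)a^*(j)$ otherwise. For $i,j\in\mathbb Z$, $E_{i,j}:=\,:a(-i)a^*(j):$ (operators giving a $\widehat{\mathfrak{gl}}$-module structure of central charge $-1$), and $I:=\sum_{j\in\mathbb Z}E_{j,j}$,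 a well-defined operator on $M_1(\bm\lambda,\bm\mu)$ commuting with all $E_{i,j}$. For $d\in\mathbb C$, $N_d$ is the smallest subspace of $M_1(\bm\lambda,\bm\mu)$ invariant under all $E_{i,j}$ and containing $(I-d)I^kw$ for all $k\ge0$, and $L(d,\bm\lambda,\bm\mu):=M_1(\bm\lambda,\bm\mu)/N_d$. The $\mathcal W_{1+\infty,c=-1}$-module structure is given by the operators $T_{r,f}=\sum_{j}f(-j):a(r-j)a^*(j):$ ($r\in\mathbb Z$, $f\in\mathbb C[x]$), which are the modes of the generating fields of $M^0=\ker J^0(0)\subset M$ (Weyl vertex algebra), $M^0\cong\mathcal W_{1+\infty,c=-1}$. *)

theory Defs
  imports "HOL-Library.Poly_Mapping" "HOL-Library.Groups_Big_Fun"
          "HOL-Computational_Algebra.Polynomial"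
begin

text \<open>Concrete PBW model of the Whittaker module M_1(lambda,mu).
  As a vector space, M_1 = C[a(r) (r<0), a*(s) (s<=0)] w (free, by PBW).
  Polynomial variables:
    Cr k  stands for a(-(k+1))   (k >= 0, i.e. a(r) with r <= -1),
    Cs k  stands for a*(-k)      (k >= 0, i.e. a*(s) with s <= 0).
  The vector w corresponds to the constant polynomial 1.\<close>

datatype wvar = Cr nat | Cs nat

type_synonym wmod = "(wvar \<Rightarrow>\<^sub>0 nat) \<Rightarrow>\<^sub>0 complex"

definition vmono :: "wvar \<Rightarrow> (wvar \<Rightarrow>\<^sub>0 nat)" where
  "vmono g = Poly_Mapping.single g 1"

definition wscale :: "complex \<Rightarrow> wmod \<Rightarrow> wmod" where
  "wscale c p = Poly_Mapping.map (\<lambda>x. c * x) p"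

definition wmul :: "wvar \<Rightarrow> wmod \<Rightarrow> wmod" where
  "wmul g p = Poly_Mapping.single (vmono g) 1 * p"

definition wder :: "wvar \<Rightarrow> wmod \<Rightarrow> wmod" where
  "wder g p = Abs_poly_mapping
     (\<lambda>\<alpha>. of_nat (Poly_Mapping.lookup \<alpha> g + 1) * Poly_Mapping.lookup p (\<alpha> + vmono g))"

definition wvec :: wmod where
  "wvec = Poly_Mapping.single 0 1"

definition opA :: "(nat \<Rightarrow> complex) \<Rightarrow> int \<Rightarrow> wmod \<Rightarrow> wmod" where
  "opA lam r p =
     (if r < 0 then wmul (Cr (nat (- r - 1))) p
      else wscale (lam (nat r)) p + wder (Cs (nat r)) p)"

definition opAs :: "(nat \<Rightarrow> complex) \<Rightarrow> int \<Rightarrow> wmod \<Rightarrow> wmod" where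
  "opAs mu s p =
     (if s \<le> 0 then wmul (Cs (nat (- s))) p
      else wscale (mu (nat s)) p - wder (Cr (nat s - 1)) p)"

text \<open>E_{i,j} = :a(-i) a*(j):\<close>
definition opE :: "(nat \<Rightarrow> complex) \<Rightarrow> (nat \<Rightarrow> complex) \<Rightarrow> int \<Rightarrow> int \<Rightarrow> wmod \<Rightarrow> wmod" where
  "opE lam mu i j p =
     (if - i \<ge> 0 \<and> j \<le> 0 then opAs mu j (opA lam (- i) p)
      else opA lam (- i) (opAs mu j p))"

text \<open>I = sum_j E_{j,j} (only finitely many terms are nonzero on each vector)\<close>
definition opI :: "(nat \<Rightarrow> complex) \<Rightarrow> (nat \<Rightarrow> complex) \<Rightarrow> wmod \<Rightarrow> wmod" where
  "opI lam mu p = Sum_any (\<lambda>j. opE lam mu j j p)"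

text \<open>T_{r,f} = sum_j f(-j) :a(r-j) a*(j): = sum_j f(-j) E_{j-r,j}\<close>
definition opT :: "(nat \<Rightarrow> complex) \<Rightarrow> (nat \<Rightarrow> complex) \<Rightarrow> int \<Rightarrow> complex poly \<Rightarrow> wmod \<Rightarrow> wmod" where
  "opT lam mu r f p = Sum_any (\<lambda>j. wscale (poly f (of_int (- j))) (opE lam mu (j - r) j p))"

definition wsubspace :: "wmod set \<Rightarrow> bool" where
  "wsubspace U \<longleftrightarrow> 0 \<in> U \<and> (\<forall>x\<in>U. \<forall>y\<in>U. x + y \<in> U) \<and> (\<forall>c. \<forall>x\<in>U. wscale c x \<in> U)"

definition E_invariant :: "(nat \<Rightarrow> complex) \<Rightarrow> (nat \<Rightarrow> complex) \<Rightarrow> wmod set \<Rightarrow> bool" where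
  "E_invariant lam mu U \<longleftrightarrow> (\<forall>i j. \<forall>x\<in>U. opE lam mu i j x \<in> U)"

definition T_invariant :: "(nat \<Rightarrow> complex) \<Rightarrow> (nat \<Rightarrow> complex) \<Rightarrow> wmod set \<Rightarrow> bool" where
  "T_invariant lam mu U \<longleftrightarrow> (\<forall>r f. \<forall>x\<in>U. opT lam mu r f x \<in> U)"

definition Nd :: "(nat \<Rightarrow> complex) \<Rightarrow> (nat \<Rightarrow> complex) \<Rightarrow> complex \<Rightarrow> wmod set" where
  "Nd lam mu d = \<Inter>{U. wsubspace U \<and> E_invariant lam mu U \<and>
      (\<forall>k. opI lam mu ((opI lam mu ^^ k) wvec) - wscale d ((opI lam mu ^^ k) wvec) \<in> U)}"

text \<open>Irreducibility of the quotient M_1/N (for N invariant): it is nonzero, and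
  (correspondence theorem) every invariant subspace between N and M_1 is N or M_1.\<close>
definition quot_irreducible_gl :: "(nat \<Rightarrow> complex) \<Rightarrow> (nat \<Rightarrow> complex) \<Rightarrow> wmod set \<Rightarrow> bool" where
  "quot_irreducible_gl lam mu N \<longleftrightarrow> N \<noteq> UNIV \<and>
     (\<forall>U. wsubspace U \<and> N \<subseteq> U \<and> E_invariant lam mu U \<longrightarrow> U = N \<or> U = UNIV)"

definition quot_irreducible_W :: "(nat \<Rightarrow> complex) \<Rightarrow> (nat \<Rightarrow> complex) \<Rightarrow> wmod set \<Rightarrow> bool" where
  "quot_irreducible_W lam mu N \<longleftrightarrow> N \<noteq> UNIV \<and>
     (\<forall>U. wsubspace U \<and> N \<subseteq> U \<and> T_invariant lam mu U \<longrightarrow> U = N \<or> U = UNIV)"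

end

theory Submission
  imports Defs
begin

(* In the PBW model M_1 = C[a(r), a*(s) : r < 0, s <= 0] w, the operator I acts as multiplication
   by the linear form ell = sum_j mu_j a(-j) + sum_i lambda_i a*(-i) plus the charge operator
   (number of a* minus number of a), and it commutes with every E_{i,j}.  Since some lambda_i0 and
   some mu_j0 are nonzero, the operators E_{k+1,j0} and E_{-i0,-k} raise monomials, so w is a
   cyclic vector and N_d is exactly the image of I - d.

   The leading form of (I - d) t is ell times the leading form of t, and x0 = a(-j0) occurs in
   ell with the nonzero coefficient mu_j0.  Eliminating x0 from leading forms one power at a time
   shows that w is not in the image of I - d and that every vector outside N_d is congruent
   modulo N_d to a vector whose leading form avoids x0.  On such a vector the operators
   E_{-k,j0} - lambda_k mu_j0 and E_{-i0,k+1} - lambda_i0 mu_{k+1} act on the leading form as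
   nonzero multiples of partial derivatives; they lower the degree while keeping x0 out of the
   leading form, until a multiple of w is reached.  So any invariant subspace strictly containing
   N_d contains w and is the whole module.  Finally, T_{r,f} with f an interpolation polynomial
   isolates a single E_{i,j}, so T-invariant subspaces are E-invariant. *)

section \<open>Polynomial calculus on the PBW model\<close>

abbreviation lookup :: "('a \<Rightarrow>\<^sub>0 'b::zero) \<Rightarrow> 'a \<Rightarrow> 'b" where
  "lookup \<equiv> Poly_Mapping.lookup"

abbreviation keys :: "('a \<Rightarrow>\<^sub>0 'b::zero) \<Rightarrow> 'a set" where
  "keys \<equiv> Poly_Mapping.keys"

type_synonym monomial = "wvar \<Rightarrow>\<^sub>0 nat"

lemma lookup_vmono: "lookup (vmono g) h = (if h = g then 1 else 0)"
  by (simp add: vmono_def Poly_Mapping.lookup_single)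

lemma lookup_add_vmono: "lookup (a + vmono g) h = lookup a h + (if h = g then 1 else 0)"
  by (simp add: Poly_Mapping.lookup_add lookup_vmono)

lemma diff_vmono_add: "0 < lookup a g \<Longrightarrow> a - vmono g + vmono g = a"
  by (rule poly_mapping_eqI) (simp add: Poly_Mapping.lookup_minus lookup_add_vmono lookup_vmono)

lemma diff_vmono_eq_self: "lookup a g = 0 \<Longrightarrow> a - vmono g = a"
  by (rule poly_mapping_eqI) (simp add: Poly_Mapping.lookup_minus lookup_vmono)

lemma add_vmono_eq_iff: "0 < lookup a g \<Longrightarrow> b + vmono g = a \<longleftrightarrow> b = a - vmono g"
  using diff_vmono_add by force

lemma lookup_wscale [simp]: "lookup (wscale c p) a = c * lookup p a"
  by (simp add: wscale_def Poly_Mapping.map.rep_eq when_def)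

lemma lookup_wmul: "lookup (wmul g p) a = (if lookup a g = 0 then 0 else lookup p (a - vmono g))"
proof -
  have "lookup (wmul g p) a = Sum_any (\<lambda>b. lookup p b when a = vmono g + b)"
    by (simp add: wmul_def Poly_Mapping.lookup_mult Poly_Mapping.lookup_single when_mult
        Sum_any_when_dependent_prod_left)
  also have "(\<lambda>b. lookup p b when a = vmono g + b)
      = (\<lambda>b. lookup p b when lookup a g \<noteq> 0 \<and> b = a - vmono g)"
  proof (cases "lookup a g = 0")
    case True
    then have "a \<noteq> vmono g + b" for b
      using lookup_add_vmono[of b g g] by (auto simp: add.commute)
    with True show ?thesis by simp
  next
    case False
    then have "a = vmono g + b \<longleftrightarrow> b = a - vmono g" for b
      using add_vmono_eq_iff[of a g b] by (auto simp: add.commute)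
    with False show ?thesis by simp
  qed
  finally show ?thesis by simp
qed

lemma lookup_wder: "lookup (wder g p) a = of_nat (lookup a g + 1) * lookup p (a + vmono g)"
proof -
  have "{a. of_nat (lookup a g + 1) * lookup p (a + vmono g) \<noteq> (0::complex)}
      \<subseteq> (\<lambda>a. a + vmono g) -` keys p"
    by (auto simp: Poly_Mapping.in_keys_iff)
  moreover have "finite ((\<lambda>a. a + vmono g) -` keys p)"
    by (rule finite_vimageI) (auto simp: inj_def)
  ultimately show ?thesis
    unfolding wder_def by (subst Abs_poly_mapping_inverse) (auto intro: finite_subset)
qed

lemma lookup_Sum_any:
  assumes "finite {j. F j \<noteq> 0}"
  shows "lookup (Sum_any F) a = Sum_any (\<lambda>j. lookup (F j) a)"
proof -
  have "lookup (Sum_any F) a = (\<Sum>j\<in>{j. F j \<noteq> 0}. lookup (F j) a)"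
    by (simp add: Sum_any.expand_set Poly_Mapping.lookup_sum)
  also have "\<dots> = Sum_any (\<lambda>j. lookup (F j) a)"
    by (rule Sum_any.expand_superset[symmetric]) (use assms in auto)
  finally show ?thesis .
qed

lemmas lookup_op_simps = Poly_Mapping.lookup_add Poly_Mapping.lookup_minus lookup_wmul lookup_wder

lemma wmul_add: "wmul g (p + q) = wmul g p + wmul g q"
  and wmul_diff: "wmul g (p - q) = wmul g p - wmul g q"
  and wmul_wscale: "wmul g (wscale c p) = wscale c (wmul g p)"
  and wmul_zero [simp]: "wmul g 0 = 0"
  by (rule poly_mapping_eqI; simp add: lookup_op_simps)+

lemma wder_add: "wder g (p + q) = wder g p + wder g q"
  and wder_diff: "wder g (p - q) = wder g p - wder g q"
  and wder_wscale: "wder g (wscale c p) = wscale c (wder g p)"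
  and wder_zero [simp]: "wder g 0 = 0"
  by (rule poly_mapping_eqI; simp add: lookup_op_simps algebra_simps)+

lemma wscale_add: "wscale c (p + q) = wscale c p + wscale c q"
  and wscale_diff: "wscale c (p - q) = wscale c p - wscale c q"
  and wscale_wscale: "wscale c (wscale c' p) = wscale (c * c') p"
  and wscale_one [simp]: "wscale 1 p = p"
  and wscale_zero_left [simp]: "wscale 0 p = 0"
  and wscale_zero [simp]: "wscale c 0 = 0"
  and wscale_minus_one: "wscale (-1) p = - p"
  by (rule poly_mapping_eqI; simp add: lookup_op_simps algebra_simps)+

lemma wmul_sum: "wmul g (sum f S) = (\<Sum>j\<in>S. wmul g (f j))"
  and wder_sum: "wder g (sum f S) = (\<Sum>j\<in>S. wder g (f j))"
  and wscale_sum: "wscale c (sum f S) = (\<Sum>j\<in>S. wscale c (f j))"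
  by (rule poly_mapping_eqI; simp add: lookup_op_simps Poly_Mapping.lookup_sum sum_distrib_left)+

lemma wmul_commute: "wmul g (wmul h p) = wmul h (wmul g p)"
  unfolding wmul_def by (simp add: mult.left_commute)

lemma wder_wmul: "wder g (wmul h p) = (if g = h then p else 0) + wmul h (wder g p)"
proof (rule poly_mapping_eqI)
  fix a :: monomial
  consider "lookup a h = 0" | "g = h" "lookup a h \<noteq> 0" | "g \<noteq> h" "lookup a h \<noteq> 0"
    by blast
  then show "lookup (wder g (wmul h p)) a = lookup ((if g = h then p else 0) + wmul h (wder g p)) a"
  proof cases
    case 1
    then show ?thesis by (simp add: lookup_op_simps lookup_vmono)
  next
    case 2
    then show ?thesis
      using diff_vmono_add[of a h] by (simp add: lookup_op_simps lookup_vmono add.commute ring_distribs)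
  next
    case 3
    then have "a + vmono g - vmono h = a - vmono h + vmono g"
      by (intro poly_mapping_eqI) (simp add: Poly_Mapping.lookup_minus lookup_add_vmono lookup_vmono)
    with 3 show ?thesis by (simp add: lookup_op_simps lookup_vmono)
  qed
qed

lemma lookup_wmul_wder_self: "lookup (wmul g (wder g p)) a = of_nat (lookup a g) * lookup p a"
  by (cases "lookup a g = 0")
    (simp_all add: lookup_op_simps diff_vmono_add Poly_Mapping.lookup_minus lookup_vmono)

definition vars :: "wmod \<Rightarrow> wvar set" where
  "vars p = \<Union> (keys ` keys p)"

lemma finite_vars: "finite (vars p)"
  by (simp add: vars_def)

lemma wder_eq_zero_if_notin_vars: "g \<notin> vars p \<Longrightarrow> wder g p = 0"
proof (rule poly_mapping_eqI)
  fix a assume "g \<notin> vars p"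
  moreover have "g \<in> keys (a + vmono g)"
    by (simp add: Poly_Mapping.in_keys_iff lookup_add_vmono)
  ultimately have "a + vmono g \<notin> keys p"
    by (auto simp: vars_def)
  then show "lookup (wder g p) a = lookup 0 a"
    by (simp add: lookup_wder Poly_Mapping.in_keys_iff)
qed

section \<open>Degrees and leading forms\<close>

definition total_deg :: "monomial \<Rightarrow> nat" where
  "total_deg a = sum (lookup a) (keys a)"

definition wmon :: "monomial \<Rightarrow> wmod" where
  "wmon a = Poly_Mapping.single a 1"

lemma total_deg_add: "total_deg (a + b) = total_deg a + total_deg b"
  unfolding total_deg_def by (rule setsum_keys_plus_distrib[where f = "\<lambda>k x. x"]) simp_all

lemma total_deg_add_vmono [simp]: "total_deg (a + vmono g) = Suc (total_deg a)"
  unfolding total_deg_add by (simp add: total_deg_def vmono_def)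

lemma total_deg_eq_0_iff: "total_deg a = 0 \<longleftrightarrow> a = 0"
proof
  assume "total_deg a = 0"
  then show "a = 0"
    by (intro poly_mapping_eqI) (auto simp: total_deg_def Poly_Mapping.in_keys_iff)
qed (simp add: total_deg_def)

lemma total_deg_diff_vmono: "0 < lookup a g \<Longrightarrow> Suc (total_deg (a - vmono g)) = total_deg a"
  using total_deg_add_vmono[of "a - vmono g" g] by (simp add: diff_vmono_add)

lemma lookup_le_total_deg: "lookup a g \<le> total_deg a"
  by (cases "g \<in> keys a") (auto simp: total_deg_def Poly_Mapping.in_keys_iff intro: member_le_sum)

lemma exists_var_if_nonzero: "(a :: monomial) \<noteq> 0 \<Longrightarrow> \<exists>g. 0 < lookup a g"
proof (rule ccontr)
  assume "\<not> (\<exists>g. 0 < lookup a g)"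
  then have "a = 0" by (intro poly_mapping_eqI) auto
  then show "a \<noteq> 0 \<Longrightarrow> False" by simp
qed

lemma lookup_wmon: "lookup (wmon b) a = (if a = b then 1 else 0)"
  by (simp add: wmon_def Poly_Mapping.lookup_single)

lemma wmul_wmon: "wmul g (wmon b) = wmon (b + vmono g)"
  by (simp add: wmul_def wmon_def vmono_def Poly_Mapping.mult_single add.commute)

lemma wder_wmon: "wder g (wmon b) = wscale (of_nat (lookup b g)) (wmon (b - vmono g))"
proof (rule poly_mapping_eqI)
  fix a
  show "lookup (wder g (wmon b)) a = lookup (wscale (of_nat (lookup b g)) (wmon (b - vmono g))) a"
  proof (cases "lookup b g = 0")
    case True
    then have "a + vmono g \<noteq> b"
      using lookup_add_vmono[of a g g] by auto
    with True show ?thesis by (simp add: lookup_wder lookup_wmon)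
  next
    case False
    then have "a + vmono g = b \<longleftrightarrow> a = b - vmono g"
      by (simp add: add_vmono_eq_iff)
    with False show ?thesis
      by (auto simp: lookup_wder lookup_wmon Poly_Mapping.lookup_minus lookup_vmono
          simp flip: of_nat_Suc)
  qed
qed

lemma wmod_eq_sum_wmon: "p = (\<Sum>a\<in>keys p. wscale (lookup p a) (wmon a))"
proof (rule poly_mapping_eqI)
  fix b
  have "lookup (\<Sum>a\<in>keys p. wscale (lookup p a) (wmon a)) b
      = (\<Sum>a\<in>keys p. if b = a then lookup p a else 0)"
    by (simp add: Poly_Mapping.lookup_sum lookup_wmon if_distrib cong: if_cong)
  also have "\<dots> = lookup p b"
    by (simp add: Poly_Mapping.in_keys_iff)
  finally show "lookup p b = lookup (\<Sum>a\<in>keys p. wscale (lookup p a) (wmon a)) b" by simp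
qed

definition deg_le :: "wmod \<Rightarrow> nat \<Rightarrow> bool" where
  "deg_le p N \<longleftrightarrow> (\<forall>a\<in>keys p. total_deg a \<le> N)"

lemma deg_le_iff: "deg_le p N \<longleftrightarrow> (\<forall>a. N < total_deg a \<longrightarrow> lookup p a = 0)"
  unfolding deg_le_def by (meson Poly_Mapping.in_keys_iff not_le)

lemma deg_leD: "deg_le p N \<Longrightarrow> N < total_deg a \<Longrightarrow> lookup p a = 0"
  by (simp add: deg_le_iff)

lemma deg_le_diff: "deg_le p N \<Longrightarrow> deg_le q N \<Longrightarrow> deg_le (p - q) N"
  and deg_le_wscale: "deg_le p N \<Longrightarrow> deg_le (wscale c p) N"
  by (simp_all add: deg_le_iff Poly_Mapping.lookup_add Poly_Mapping.lookup_minus)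

lemma deg_le_mono: "deg_le p N \<Longrightarrow> N \<le> N' \<Longrightarrow> deg_le p N'"
  by (auto simp: deg_le_def)

lemma exists_deg_le: "\<exists>N. deg_le p N"
  by (auto simp: deg_le_def intro!: exI[of _ "\<Sum>a\<in>keys p. total_deg a"] member_le_sum)

lemma deg_le_sum: "(\<And>j. j \<in> S \<Longrightarrow> deg_le (f j) N) \<Longrightarrow> deg_le (sum f S) N"
  by (simp add: deg_le_iff Poly_Mapping.lookup_sum)

lemma deg_le_wder: "deg_le p (Suc N) \<Longrightarrow> deg_le (wder g p) N"
  by (simp add: deg_le_iff lookup_wder)

lemma deg_le_wmul: "deg_le p N \<Longrightarrow> deg_le (wmul g p) (Suc N)"
  by (auto simp: deg_le_iff lookup_wmul dest: total_deg_diff_vmono)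

lemma lookup_wder_wder_eq_zero:
  "deg_le r (Suc N) \<Longrightarrow> total_deg b = N \<Longrightarrow> lookup (wder g (wder h r)) b = 0"
  by (simp add: lookup_wder deg_leD)

lemma lookup_add_vmono_eq_zero:
  assumes "\<forall>a\<in>keys r. total_deg a = Suc N \<longrightarrow> lookup a g = 0" "total_deg b = N"
  shows "lookup r (b + vmono g) = 0"
proof (rule ccontr)
  assume "lookup r (b + vmono g) \<noteq> 0"
  with assms have "lookup (b + vmono g) g = 0"
    by (simp add: Poly_Mapping.in_keys_iff)
  then show False
    by (simp add: lookup_add_vmono)
qed

lemma exists_leading_monomial:
  assumes "t \<noteq> 0"
  obtains N a where "deg_le t N" "a \<in> keys t" "total_deg a = N"
    "\<forall>b\<in>keys t. total_deg b = N \<longrightarrow> lookup b g \<le> lookup a g"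
proof -
  define N where "N = Max (total_deg ` keys t)"
  define A where "A = {b \<in> keys t. total_deg b = N}"
  have "N \<in> total_deg ` keys t"
    using assms unfolding N_def by (intro Max_in) auto
  then have "finite A" "A \<noteq> {}"
    by (auto simp: A_def)
  then have "Max ((\<lambda>b. lookup b g) ` A) \<in> (\<lambda>b. lookup b g) ` A"
    by (intro Max_in) auto
  then obtain a where "a \<in> A" "lookup a g = Max ((\<lambda>b. lookup b g) ` A)"
    by (auto simp: image_iff)
  moreover have "deg_le t N"
    by (simp add: deg_le_def N_def)
  ultimately show ?thesis
    using that \<open>finite A\<close> by (auto simp: A_def)
qed

lemma exists_leading_quotient:
  obtains t where "deg_le t N" "\<And>b. total_deg b = N \<Longrightarrow> lookup t b = lookup v (b + vmono g) / c"
proof -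
  define f where "f b = (if total_deg b = N then lookup v (b + vmono g) / c else 0)" for b
  have "{b. f b \<noteq> 0} \<subseteq> (\<lambda>b. b + vmono g) -` keys v"
    by (auto simp: f_def Poly_Mapping.in_keys_iff)
  moreover have "finite ((\<lambda>b. b + vmono g) -` keys v)"
    by (rule finite_vimageI) (auto simp: inj_def)
  ultimately have "finite {b. f b \<noteq> 0}"
    by (rule finite_subset)
  then have "lookup (Abs_poly_mapping f) = f"
    by simp
  then show ?thesis
    by (intro that[of "Abs_poly_mapping f"]) (simp_all add: deg_le_iff f_def)
qed

lemma deg_le_0_eq_wscale_wvec:
  assumes "deg_le r 0"
  shows "r = wscale (lookup r 0) wvec"
proof (rule poly_mapping_eqI)
  fix a :: monomial
  have "lookup r a = 0" if "a \<noteq> 0"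
    using assms that total_deg_eq_0_iff[of a] by (auto intro: deg_leD)
  then show "lookup r a = lookup (wscale (lookup r 0) wvec) a"
    by (auto simp: wvec_def Poly_Mapping.lookup_one when_def)
qed

definition leading_form_avoids :: "wvar \<Rightarrow> wmod \<Rightarrow> nat \<Rightarrow> bool" where
  "leading_form_avoids g r N \<longleftrightarrow> deg_le r N \<and> (\<exists>a\<in>keys r. total_deg a = N) \<and>
     (\<forall>a\<in>keys r. total_deg a = N \<longrightarrow> lookup a g = 0)"

(* The hypotheses on r' say that its degree-N part is c times the g-derivative of the leading
   form of r; a derivative of a form avoiding x still avoids x. *)

lemma leading_form_avoids_lower:
  assumes r: "leading_form_avoids x r (Suc N)"
    and a: "a \<in> keys r" "total_deg a = Suc N" "0 < lookup a g"
    and r': "deg_le r' N"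
      "\<And>b. total_deg b = N \<Longrightarrow> lookup r' b = c * of_nat (lookup b g + 1) * lookup r (b + vmono g)"
    and "c \<noteq> 0"
  shows "leading_form_avoids x r' N"
  unfolding leading_form_avoids_def
proof (intro conjI ballI impI)
  have "total_deg (a - vmono g) = N" "Suc (lookup (a - vmono g) g) = lookup a g"
    using a total_deg_diff_vmono[of a g] by (simp_all add: Poly_Mapping.lookup_minus lookup_vmono)
  moreover have "lookup r a \<noteq> 0"
    using a by (simp add: Poly_Mapping.in_keys_iff)
  ultimately have "lookup r' (a - vmono g) \<noteq> 0"
    using a r' \<open>c \<noteq> 0\<close> by (simp add: diff_vmono_add flip: of_nat_Suc)
  with \<open>total_deg (a - vmono g) = N\<close> show "\<exists>b\<in>keys r'. total_deg b = N"
    by (auto simp: Poly_Mapping.in_keys_iff)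
next
  fix b assume b: "b \<in> keys r'" "total_deg b = N"
  show "lookup b x = 0"
  proof (rule ccontr)
    assume "lookup b x \<noteq> 0"
    then have "b + vmono g \<notin> keys r"
      using r b by (auto simp: leading_form_avoids_def lookup_add_vmono)
    then have "lookup r' b = 0"
      using r' b by (simp add: Poly_Mapping.in_keys_iff)
    with b show False
      by (simp add: Poly_Mapping.in_keys_iff)
  qed
qed (use r' in simp)

section \<open>The Whittaker operators\<close>

lemma wsubspace_zero: "wsubspace U \<Longrightarrow> 0 \<in> U"
  and wsubspace_add: "wsubspace U \<Longrightarrow> x \<in> U \<Longrightarrow> y \<in> U \<Longrightarrow> x + y \<in> U"
  and wsubspace_wscale: "wsubspace U \<Longrightarrow> x \<in> U \<Longrightarrow> wscale c x \<in> U"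
  unfolding wsubspace_def by blast+

lemma wsubspace_diff: "wsubspace U \<Longrightarrow> x \<in> U \<Longrightarrow> y \<in> U \<Longrightarrow> x - y \<in> U"
  using wsubspace_add[of U x "- y"] wsubspace_wscale[of U y "-1"] by (simp add: wscale_minus_one)

lemma wsubspace_sum: "wsubspace U \<Longrightarrow> (\<And>j. j \<in> S \<Longrightarrow> f j \<in> U) \<Longrightarrow> sum f S \<in> U"
  by (induction S rule: infinite_finite_induct) (auto intro: wsubspace_zero wsubspace_add)

lemma wsubspace_cancel:
  assumes "wsubspace U" "wscale c x + z \<in> U" "z \<in> U" "c \<noteq> 0"
  shows "x \<in> U"
proof -
  have "wscale (1 / c) (wscale c x + z - z) \<in> U"
    using assms by (intro wsubspace_wscale wsubspace_diff)
  with \<open>c \<noteq> 0\<close> show ?thesis by (simp add: wscale_wscale)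
qed

lemma E_invariantD: "E_invariant lam mu U \<Longrightarrow> x \<in> U \<Longrightarrow> opE lam mu i j x \<in> U"
  unfolding E_invariant_def by blast

lemma opA_add: "opA lam r (p + q) = opA lam r p + opA lam r q"
  and opA_diff: "opA lam r (p - q) = opA lam r p - opA lam r q"
  and opA_wscale: "opA lam r (wscale c p) = wscale c (opA lam r p)"
  by (simp_all add: opA_def wmul_add wder_add wscale_add wmul_diff wder_diff wscale_diff
      wmul_wscale wder_wscale wscale_wscale mult.commute)

lemma opAs_add: "opAs mu s (p + q) = opAs mu s p + opAs mu s q"
  and opAs_diff: "opAs mu s (p - q) = opAs mu s p - opAs mu s q"
  and opAs_wscale: "opAs mu s (wscale c p) = wscale c (opAs mu s p)"
  by (simp_all add: opAs_def wmul_add wder_add wscale_add wmul_diff wder_diff wscale_diff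
      wmul_wscale wder_wscale wscale_wscale mult.commute)

lemma opE_diff: "opE lam mu i j (p - q) = opE lam mu i j p - opE lam mu i j q"
  and opE_wscale: "opE lam mu i j (wscale c p) = wscale c (opE lam mu i j p)"
  by (simp_all add: opE_def opA_add opAs_add opA_diff opAs_diff opA_wscale opAs_wscale)

lemma opA_zero [simp]: "opA lam r 0 = 0"
  and opAs_zero [simp]: "opAs mu s 0 = 0"
  by (simp_all add: opA_def opAs_def)

lemma opA_eq_zero:
  "0 \<le> r \<Longrightarrow> lam (nat r) = 0 \<Longrightarrow> Cs (nat r) \<notin> vars p \<Longrightarrow> opA lam r p = 0"
  by (simp add: opA_def wder_eq_zero_if_notin_vars)

lemma opAs_eq_zero:
  "1 \<le> s \<Longrightarrow> mu (nat s) = 0 \<Longrightarrow> Cr (nat s - 1) \<notin> vars p \<Longrightarrow> opAs mu s p = 0"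
  by (simp add: opAs_def wder_eq_zero_if_notin_vars)

(* diag_var j is the creation variable occurring in E_{j,j}: a(-j) for j >= 1 and a*(j) for j <= 0;
   ell_coeff lam mu g is the coefficient of g in the linear form ell. *)

definition diag_var :: "int \<Rightarrow> wvar" where
  "diag_var j = (if 1 \<le> j then Cr (nat j - 1) else Cs (nat (- j)))"

definition var_charge :: "wvar \<Rightarrow> complex" where
  "var_charge g = (case g of Cr _ \<Rightarrow> -1 | Cs _ \<Rightarrow> 1)"

definition charge :: "monomial \<Rightarrow> complex" where
  "charge a = (\<Sum>g\<in>keys a. var_charge g * of_nat (lookup a g))"

definition charge_op :: "wmod \<Rightarrow> wmod" where
  "charge_op p = Abs_poly_mapping (\<lambda>a. charge a * lookup p a)"

definition ell_coeff :: "(nat \<Rightarrow> complex) \<Rightarrow> (nat \<Rightarrow> complex) \<Rightarrow> wvar \<Rightarrow> complex" where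
  "ell_coeff lam mu g = (case g of Cr k \<Rightarrow> mu (k + 1) | Cs k \<Rightarrow> lam k)"

lemma diag_var_eq_Cr_iff: "diag_var j = Cr k \<longleftrightarrow> j = int k + 1"
  and diag_var_eq_Cs_iff: "diag_var j = Cs k \<longleftrightarrow> j = - int k"
  by (auto simp: diag_var_def)

lemma bij_diag_var: "bij diag_var"
proof (rule bijI)
  show "inj diag_var"
    by (rule injI) (auto simp: diag_var_def split: if_splits)
  have "g \<in> range diag_var" for g
    by (cases g) (auto simp: image_iff diag_var_eq_Cr_iff diag_var_eq_Cs_iff eq_commute[of "Cr _"]
        eq_commute[of "Cs _"])
  then show "surj diag_var"
    by blast
qed

lemma lookup_charge_op: "lookup (charge_op p) a = charge a * lookup p a"
proof -
  have "{a. charge a * lookup p a \<noteq> 0} \<subseteq> keys p"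
    by (auto simp: Poly_Mapping.in_keys_iff)
  then show ?thesis
    unfolding charge_op_def by (subst Abs_poly_mapping_inverse) (auto intro: finite_subset)
qed

lemma charge_add: "charge (a + b) = charge a + charge b"
  unfolding charge_def by (rule setsum_keys_plus_distrib) (simp_all add: algebra_simps)

lemma charge_vmono [simp]: "charge (vmono g) = var_charge g"
  by (simp add: charge_def vmono_def)

lemma charge_op_add: "charge_op (p + q) = charge_op p + charge_op q"
  and charge_op_wscale: "charge_op (wscale c p) = wscale c (charge_op p)"
  and charge_op_wder: "charge_op (wder g p) = wder g (charge_op p) - wscale (var_charge g) (wder g p)"
  by (rule poly_mapping_eqI; simp add: lookup_charge_op lookup_op_simps charge_add algebra_simps)+

lemma charge_op_wmul: "charge_op (wmul g p) = wmul g (charge_op p) + wscale (var_charge g) (wmul g p)"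
proof (rule poly_mapping_eqI)
  fix a
  show "lookup (charge_op (wmul g p)) a = lookup (wmul g (charge_op p) + wscale (var_charge g) (wmul g p)) a"
  proof (cases "lookup a g = 0")
    case False
    then have "charge a = charge (a - vmono g) + var_charge g"
      using charge_add[of "a - vmono g" "vmono g"] by (simp add: diff_vmono_add)
    with False show ?thesis by (simp add: lookup_op_simps lookup_charge_op algebra_simps)
  qed (simp add: lookup_op_simps lookup_charge_op)
qed

lemma opE_diag:
  "opE lam mu j j p = wscale (ell_coeff lam mu (diag_var j)) (wmul (diag_var j) p)
     + wscale (var_charge (diag_var j)) (wmul (diag_var j) (wder (diag_var j) p))"
  by (simp add: opE_def opA_def opAs_def diag_var_def ell_coeff_def var_charge_def
      wmul_add wmul_diff wmul_wscale wscale_minus_one nat_diff_distrib')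

lemma opE_annihilation:
  assumes "1 \<le> j"
  shows "opE lam mu (- int k) (int j) p - wscale (lam k * mu j) p
    = wscale (mu j) (wder (Cs k) p) - wscale (lam k) (wder (Cr (j - 1)) p) - wder (Cs k) (wder (Cr (j - 1)) p)"
  using assms by (simp add: opE_def opA_def opAs_def wder_diff wder_wscale wscale_diff wscale_wscale
      mult.commute algebra_simps)

lemma exists_poly_indicator:
  assumes "finite S"
  shows "\<exists>f :: complex poly. poly f (of_int (- j)) = 1 \<and> (\<forall>k\<in>S - {j}. poly f (of_int (- k)) = 0)"
proof -
  define c :: complex where "c = (\<Prod>k\<in>S - {j}. of_int k - of_int j)"
  define f where "f = smult (1 / c) (\<Prod>k\<in>S - {j}. [:of_int k, 1:])"
  have poly_f: "poly f (- of_int i) = (\<Prod>k\<in>S - {j}. of_int k - of_int i) / c" for i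
    by (simp add: f_def poly_prod)
  have "c \<noteq> 0"
    using assms by (simp add: c_def)
  then have "poly f (of_int (- j)) = 1"
    by (simp add: poly_f c_def)
  moreover have "poly f (of_int (- k)) = 0" if "k \<in> S - {j}" for k
    using assms that by (simp add: poly_f prod_zero_iff)
  ultimately show ?thesis
    by blast
qed

locale whittaker_params =
  fixes lam mu :: "nat \<Rightarrow> complex" and n m :: nat
  assumes lam_vanish: "\<forall>i>n. lam i = 0" and mu_vanish: "\<forall>j>m. mu j = 0"
begin

abbreviation E where "E \<equiv> opE lam mu"
abbreviation I where "I \<equiv> opI lam mu"

lemma finite_opE_support: "finite {j. E (j - r) j p \<noteq> 0}"
proof -
  let ?B = "{- (\<bar>r\<bar> + int n + 1) .. \<bar>r\<bar> + int m + 1}"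
  let ?Cr = "(\<lambda>k. int k + 1) ` (Cr -` vars p)"
  let ?Cs = "(\<lambda>k. r - int k) ` (Cs -` vars p)"
  have "E (j - r) j p = 0" if "j \<notin> ?B \<union> ?Cr \<union> ?Cs" for j
  proof (cases "1 \<le> j")
    case True
    moreover have "j = int (nat j - 1) + 1"
      using True by simp
    ultimately have "j > int m" "Cr (nat j - 1) \<notin> vars p"
      using that by (auto simp: image_iff)
    with True have "opAs mu j p = 0"
      using mu_vanish by (intro opAs_eq_zero) auto
    with True show ?thesis by (simp add: opE_def)
  next
    case False
    with that have "r - j > int n"
      by auto
    have "Cs (nat (r - j)) \<notin> vars p"
    proof
      assume "Cs (nat (r - j)) \<in> vars p"
      then have "r - int (nat (r - j)) \<in> ?Cs"
        by blast
      with \<open>r - j > int n\<close> that show False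
        by simp
    qed
    with \<open>r - j > int n\<close> have "opA lam (- (j - r)) p = 0"
      using lam_vanish by (intro opA_eq_zero) auto
    with False \<open>r - j > int n\<close> show ?thesis by (simp add: opE_def)
  qed
  then have "{j. E (j - r) j p \<noteq> 0} \<subseteq> ?B \<union> ?Cr \<union> ?Cs"
    by blast
  moreover have "finite (?B \<union> ?Cr \<union> ?Cs)"
    by (auto intro!: finite_vimageI simp: finite_vars inj_def)
  ultimately show ?thesis
    by (rule finite_subset)
qed

lemma ell_coeff_diag_var_nonzero:
  assumes "ell_coeff lam mu (diag_var j) \<noteq> 0"
  shows "j \<in> {- int n..int m}"
proof (cases "1 \<le> j")
  case True
  then have "mu (nat j) \<noteq> 0"
    using assms by (simp add: diag_var_def ell_coeff_def)
  then have "nat j \<le> m"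
    using mu_vanish by (meson not_less)
  with True show ?thesis
    by auto
next
  case False
  then have "lam (nat (- j)) \<noteq> 0"
    using assms by (simp add: diag_var_def ell_coeff_def)
  then have "nat (- j) \<le> n"
    using lam_vanish by (meson not_less)
  with False show ?thesis
    by auto
qed

definition ell_mul :: "wmod \<Rightarrow> wmod" where
  "ell_mul p = (\<Sum>j\<in>{- int n..int m}. wscale (ell_coeff lam mu (diag_var j)) (wmul (diag_var j) p))"

lemma lookup_ell_mul:
  "lookup (ell_mul p) a = (\<Sum>j\<in>{- int n..int m}. ell_coeff lam mu (diag_var j) *
     (if lookup a (diag_var j) = 0 then 0 else lookup p (a - vmono (diag_var j))))"
  by (simp add: ell_mul_def Poly_Mapping.lookup_sum lookup_wmul)

lemma opI_eq_ell_mul_plus_charge_op: "I p = ell_mul p + charge_op p"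
proof (rule poly_mapping_eqI)
  fix a
  define c where "c j = ell_coeff lam mu (diag_var j) * lookup (wmul (diag_var j) p) a" for j
  define e where "e g = var_charge g * of_nat (lookup a g)" for g
  have fin_c: "finite {j. c j \<noteq> 0}"
    by (rule finite_subset[of _ "{- int n..int m}"]) (auto simp: c_def dest: ell_coeff_diag_var_nonzero)
  have fin_e: "finite {g. e g \<noteq> 0}"
    by (rule finite_subset[of _ "keys a"]) (auto simp: e_def Poly_Mapping.in_keys_iff)
  have fin_e_diag: "finite {j. e (diag_var j) \<noteq> 0}"
    using finite_vimageI[OF fin_e bij_is_inj[OF bij_diag_var]] by (simp add: vimage_def)
  have "lookup (I p) a = Sum_any (\<lambda>j. lookup (E j j p) a)"
    unfolding opI_def by (rule lookup_Sum_any) (use finite_opE_support[of 0 p] in simp)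
  also have "\<dots> = Sum_any (\<lambda>j. c j + e (diag_var j) * lookup p a)"
    by (simp add: opE_diag c_def e_def Poly_Mapping.lookup_add lookup_wmul_wder_self mult.assoc)
  also have "\<dots> = Sum_any c + Sum_any (\<lambda>j. e (diag_var j)) * lookup p a"
    using fin_e_diag by (subst Sum_any.distrib[OF fin_c]) (auto intro: finite_subset simp: Sum_any_left_distrib)
  also have "Sum_any c = lookup (ell_mul p) a"
    by (subst Sum_any.expand_superset[of "{- int n..int m}"])
      (auto simp: c_def ell_mul_def Poly_Mapping.lookup_sum dest: ell_coeff_diag_var_nonzero)
  also have "Sum_any (\<lambda>j. e (diag_var j)) = Sum_any e"
    by (rule Sum_any.reindex_cong[OF bij_diag_var, symmetric]) (simp add: comp_def)
  also have "\<dots> = charge a"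
    unfolding charge_def e_def by (rule Sum_any.expand_superset) (auto simp: Poly_Mapping.in_keys_iff)
  finally show "lookup (I p) a = lookup (ell_mul p + charge_op p) a"
    by (simp add: Poly_Mapping.lookup_add lookup_charge_op)
qed

lemma ell_mul_add: "ell_mul (p + q) = ell_mul p + ell_mul q"
  and ell_mul_wscale: "ell_mul (wscale c p) = wscale c (ell_mul p)"
  and ell_mul_wmul: "ell_mul (wmul g p) = wmul g (ell_mul p)"
  by (simp_all add: ell_mul_def wmul_add wscale_add sum.distrib wmul_wscale wscale_wscale
      wscale_sum wmul_sum wmul_commute mult.commute)

lemma wder_ell_mul: "wder g (ell_mul p) = ell_mul (wder g p) + wscale (ell_coeff lam mu g) p"
proof -
  obtain k where k: "diag_var k = g"
    using bij_diag_var by (metis bij_pointE)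
  then have diag_eq_iff: "diag_var j = g \<longleftrightarrow> j = k" for j
    using bij_diag_var by (auto dest: bij_is_inj injD)
  have "wder g (ell_mul p) = (\<Sum>j\<in>{- int n..int m}.
      wscale (if diag_var j = g then ell_coeff lam mu g else 0) p) + ell_mul (wder g p)"
    by (auto simp: ell_mul_def wder_sum wder_wscale wder_wmul wscale_add sum.distrib intro!: sum.cong)
  also have "(\<Sum>j\<in>{- int n..int m}. wscale (if diag_var j = g then ell_coeff lam mu g else 0) p)
      = wscale (ell_coeff lam mu g) p"
  proof (cases "k \<in> {- int n..int m}")
    case False
    then have "ell_coeff lam mu g = 0"
      using ell_coeff_diag_var_nonzero[of k] k by blast
    with False show ?thesis
      by (simp add: diag_eq_iff if_distrib[of "\<lambda>c. wscale c p"] cong: if_cong)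
  qed (simp add: diag_eq_iff if_distrib[of "\<lambda>c. wscale c p"] cong: if_cong)
  finally show ?thesis
    by (simp add: add.commute)
qed

lemma opI_add: "I (p + q) = I p + I q"
  and opI_wscale: "I (wscale c p) = wscale c (I p)"
  by (simp_all add: opI_eq_ell_mul_plus_charge_op ell_mul_add ell_mul_wscale charge_op_add
      charge_op_wscale wscale_add algebra_simps)

lemma opI_diff: "I (p - q) = I p - I q"
  using opI_add[of "p - q" q] by (simp add: algebra_simps)

lemma opI_wmul: "I (wmul g p) = wmul g (I p) + wscale (var_charge g) (wmul g p)"
  by (simp add: opI_eq_ell_mul_plus_charge_op ell_mul_wmul charge_op_wmul wmul_add algebra_simps)

lemma opI_wder:
  "I (wder g p) = wder g (I p) - wscale (ell_coeff lam mu g) p - wscale (var_charge g) (wder g p)"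
  by (simp add: opI_eq_ell_mul_plus_charge_op wder_ell_mul charge_op_wder wder_add algebra_simps)

lemma opI_opA: "I (opA lam r p) = opA lam r (I p) - opA lam r p"
  by (simp add: opA_def opI_wmul opI_add opI_wscale opI_wder ell_coeff_def var_charge_def
      wscale_minus_one algebra_simps)

lemma opI_opAs: "I (opAs mu s p) = opAs mu s (I p) + opAs mu s p"
proof (cases "s \<le> 0")
  case False
  then have "nat s - 1 + 1 = nat s" by simp
  with False show ?thesis
    by (simp add: opAs_def opI_diff opI_wscale opI_wder ell_coeff_def var_charge_def
        wscale_minus_one algebra_simps)
qed (simp add: opAs_def opI_wmul var_charge_def)

lemma opI_opE: "I (E i j p) = E i j (I p)"
  by (simp add: opE_def opI_opA opI_opAs opA_add opAs_diff opA_diff opAs_add)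

definition I_minus :: "complex \<Rightarrow> wmod \<Rightarrow> wmod" where
  "I_minus d t = I t - wscale d t"

lemma I_minus_add: "I_minus d (p + q) = I_minus d p + I_minus d q"
  and I_minus_wscale: "I_minus d (wscale c p) = wscale c (I_minus d p)"
  and opE_I_minus: "E i j (I_minus d p) = I_minus d (E i j p)"
  by (simp_all add: I_minus_def opI_add opI_wscale wscale_add wscale_diff wscale_wscale
      opE_diff opE_wscale opI_opE mult.commute)

lemma I_minus_zero [simp]: "I_minus d 0 = 0"
  using I_minus_wscale[of d 0 0] by simp

lemma deg_le_ell_mul: "deg_le t N \<Longrightarrow> deg_le (ell_mul t) (Suc N)"
  unfolding ell_mul_def by (intro deg_le_sum deg_le_wscale deg_le_wmul)

lemma lookup_I_minus_above:
  "deg_le t N \<Longrightarrow> N < total_deg a \<Longrightarrow> lookup (I_minus d t) a = lookup (ell_mul t) a"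
  by (simp add: I_minus_def opI_eq_ell_mul_plus_charge_op Poly_Mapping.lookup_add
      Poly_Mapping.lookup_minus lookup_charge_op deg_leD)

lemma deg_le_I_minus: "deg_le t N \<Longrightarrow> deg_le (I_minus d t) (Suc N)"
  using deg_le_ell_mul by (simp add: deg_le_iff lookup_I_minus_above)

lemma diff_I_minus_notin_range:
  assumes "v \<notin> range (I_minus d)"
  shows "v - I_minus d t \<notin> range (I_minus d)"
proof
  assume "v - I_minus d t \<in> range (I_minus d)"
  then obtain s where "v - I_minus d t = I_minus d s"
    by blast
  then have "v = I_minus d (s + t)"
    by (simp add: I_minus_add algebra_simps)
  with assms show False
    by blast
qed

lemma wsubspace_range_I_minus: "wsubspace (range (I_minus d))"
  unfolding wsubspace_def
proof (intro conjI ballI allI)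
  show "0 \<in> range (I_minus d)"
    by (rule range_eqI[of _ _ 0]) simp
  fix x y assume "x \<in> range (I_minus d)" "y \<in> range (I_minus d)"
  then obtain p q where "x = I_minus d p" "y = I_minus d q"
    by blast
  then show "x + y \<in> range (I_minus d)"
    by (intro range_eqI[of _ _ "p + q"]) (simp add: I_minus_add)
next
  fix c x assume "x \<in> range (I_minus d)"
  then obtain p where "x = I_minus d p"
    by blast
  then show "wscale c x \<in> range (I_minus d)"
    by (intro range_eqI[of _ _ "wscale c p"]) (simp add: I_minus_wscale)
qed

lemma E_invariant_range_I_minus: "E_invariant lam mu (range (I_minus d))"
  unfolding E_invariant_def by (auto simp: opE_I_minus)

lemma Nd_subset_range_I_minus: "Nd lam mu d \<subseteq> range (I_minus d)"
  unfolding Nd_def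
  using wsubspace_range_I_minus E_invariant_range_I_minus by (auto simp: I_minus_def)

lemma wsubspace_Nd: "wsubspace (Nd lam mu d)"
  unfolding Nd_def wsubspace_def by blast

lemma E_invariant_Nd: "E_invariant lam mu (Nd lam mu d)"
  unfolding Nd_def E_invariant_def by blast

lemma I_minus_wvec_in_Nd: "I_minus d wvec \<in> Nd lam mu d"
proof -
  have "I ((I ^^ 0) wvec) - wscale d ((I ^^ 0) wvec) \<in> Nd lam mu d"
    unfolding Nd_def by blast
  then show ?thesis
    by (simp add: I_minus_def)
qed

(* With f an interpolation polynomial, T_{j-i,f} x = E_{i,j} x: only one summand survives. *)

lemma E_invariant_if_T_invariant:
  assumes "T_invariant lam mu U"
  shows "E_invariant lam mu U"
  unfolding E_invariant_def
proof (intro allI ballI)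
  fix i j x assume "x \<in> U"
  obtain f :: "complex poly" where f: "poly f (of_int (- j)) = 1"
    "\<forall>k\<in>{k. E (k - (j - i)) k x \<noteq> 0} - {j}. poly f (of_int (- k)) = 0"
    using exists_poly_indicator[OF finite_opE_support] by blast
  then have "wscale (poly f (of_int (- k))) (E (k - (j - i)) k x) = (if k = j then E i j x else 0)"
    for k
    by (cases "k = j"; cases "E (k - (j - i)) k x = 0") auto
  then have "opT lam mu (j - i) f x = E i j x"
    by (simp add: opT_def)
  with assms \<open>x \<in> U\<close> show "E i j x \<in> U"
    unfolding T_invariant_def by metis
qed

lemma quot_irreducible_W_if_gl: "quot_irreducible_gl lam mu N \<Longrightarrow> quot_irreducible_W lam mu N"
  unfolding quot_irreducible_gl_def quot_irreducible_W_def using E_invariant_if_T_invariant by blast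

end

section \<open>Irreducibility\<close>

locale nondegenerate_whittaker = whittaker_params +
  fixes i0 j0 :: nat
  assumes lam_i0: "lam i0 \<noteq> 0" and j0_pos: "1 \<le> j0" and mu_j0: "mu j0 \<noteq> 0"
begin

abbreviation x0 where "x0 \<equiv> Cr (j0 - 1)"
abbreviation y0 where "y0 \<equiv> Cs i0"

lemma j0_le_m: "j0 \<le> m"
  using mu_vanish mu_j0 by (meson not_le)

lemma exists_raising_opE:
  "\<exists>i j c c' h. c \<noteq> 0 \<and> (\<forall>p. E i j p = wscale c (wmul g p) + wscale c' (wmul g (wder h p)))"
proof (cases g)
  case (Cr k)
  have "E (int k + 1) (int j0) p = wscale (mu j0) (wmul g p) + wscale (-1) (wmul g (wder x0 p))" for p
    using j0_pos Cr
    by (simp add: opE_def opA_def opAs_def wmul_diff wmul_wscale wscale_minus_one nat_diff_distrib')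
  with mu_j0 show ?thesis
    by blast
next
  case (Cs k)
  have "E (- int i0) (- int k) p = wscale (lam i0) (wmul g p) + wscale 1 (wmul g (wder y0 p))" for p
    using Cs by (simp add: opE_def opA_def opAs_def wmul_add wmul_wscale)
  with lam_i0 show ?thesis
    by blast
qed

lemma wmon_in_invariant_subspace:
  assumes U: "wsubspace U" "E_invariant lam mu U" and "wvec \<in> U"
  shows "wmon a \<in> U"
proof (induction "total_deg a" arbitrary: a)
  case 0
  then show ?case
    using \<open>wvec \<in> U\<close> by (simp add: total_deg_eq_0_iff wmon_def wvec_def)
next
  case (Suc N)
  have IH: "wmon b \<in> U" if "total_deg b = N" for b
    using Suc.hyps(1) that by blast
  have "a \<noteq> 0"
    using Suc.hyps(2) total_deg_eq_0_iff[of a] by auto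
  then obtain g where g: "0 < lookup a g"
    using exists_var_if_nonzero by blast
  define b where "b = a - vmono g"
  have a: "a = b + vmono g" and b: "total_deg b = N"
    using g Suc.hyps(2) total_deg_diff_vmono[OF g] by (simp_all add: b_def diff_vmono_add)
  obtain i j c c' h where "c \<noteq> 0"
    and E: "\<And>p. E i j p = wscale c (wmul g p) + wscale c' (wmul g (wder h p))"
    using exists_raising_opE[of g] by blast
  have "wmul g (wder h (wmon b)) \<in> U"
  proof (cases "lookup b h = 0")
    case False
    then have "total_deg (b - vmono h + vmono g) = N"
      using total_deg_diff_vmono[of b h] b by simp
    then have "wmon (b - vmono h + vmono g) \<in> U"
      by (rule IH)
    then show ?thesis
      using U by (simp add: wder_wmon wmul_wscale wmul_wmon wsubspace_wscale)
  qed (simp add: wder_wmon wsubspace_zero[OF U(1)])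
  moreover have "E i j (wmon b) \<in> U"
    using IH[OF b] U(2) by (rule E_invariantD[rotated])
  ultimately have "wscale c (wmon a) + wscale c' (wmul g (wder h (wmon b))) \<in> U"
    by (simp add: E a wmul_wmon)
  then show ?case
    using U(1) \<open>wmul g (wder h (wmon b)) \<in> U\<close> \<open>c \<noteq> 0\<close>
    by (blast intro: wsubspace_cancel wsubspace_wscale)
qed

lemma invariant_subspace_eq_UNIV:
  assumes "wsubspace U" "E_invariant lam mu U" "wvec \<in> U"
  shows "U = UNIV"
proof -
  have "(\<Sum>a\<in>keys p. wscale (lookup p a) (wmon a)) \<in> U" for p
    using assms by (intro wsubspace_sum wsubspace_wscale wmon_in_invariant_subspace)
  then show ?thesis
    by (metis UNIV_eq_I wmod_eq_sum_wmon)
qed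

lemma Nd_eq_range_I_minus: "Nd lam mu d = range (I_minus d)"
proof
  let ?S = "{t. I_minus d t \<in> Nd lam mu d}"
  have "wsubspace ?S"
    using wsubspace_Nd by (auto simp: wsubspace_def I_minus_add I_minus_wscale)
  moreover have "E_invariant lam mu ?S"
    using E_invariant_Nd by (auto simp: E_invariant_def simp flip: opE_I_minus)
  moreover have "wvec \<in> ?S"
    using I_minus_wvec_in_Nd by simp
  ultimately have "?S = UNIV"
    by (rule invariant_subspace_eq_UNIV)
  then show "range (I_minus d) \<subseteq> Nd lam mu d"
    by blast
qed (rule Nd_subset_range_I_minus)

lemma lookup_ell_mul_leading:
  assumes t: "deg_le t N" and a: "total_deg a = Suc N"
    and below: "\<forall>b\<in>keys t. total_deg b = N \<longrightarrow> lookup b x0 < lookup a x0"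
  shows "lookup (ell_mul t) a = mu j0 * lookup t (a - vmono x0)"
proof -
  have "ell_coeff lam mu (diag_var j) *
      (if lookup a (diag_var j) = 0 then 0 else lookup t (a - vmono (diag_var j)))
      = (if j = int j0 then mu j0 * lookup t (a - vmono x0) else 0)" for j
  proof (cases "j = int j0")
    case True
    then have "diag_var j = x0"
      using j0_pos by (simp add: diag_var_def)
    moreover have "lookup t (a - vmono x0) = 0" if "lookup a x0 = 0"
      using that t a by (simp add: diff_vmono_eq_self deg_leD)
    ultimately show ?thesis
      using True j0_pos by (simp add: ell_coeff_def)
  next
    case False
    then have "diag_var j \<noteq> x0"
      using j0_pos by (auto simp: diag_var_eq_Cr_iff)
    then have "lookup (a - vmono (diag_var j)) x0 = lookup a x0"
      by (simp add: Poly_Mapping.lookup_minus lookup_vmono)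
    moreover have "total_deg (a - vmono (diag_var j)) = N" if "0 < lookup a (diag_var j)"
      using total_deg_diff_vmono[OF that] a by simp
    ultimately show ?thesis
      using False below by (auto simp: Poly_Mapping.in_keys_iff)
  qed
  then show ?thesis
    using j0_le_m by (simp add: lookup_ell_mul)
qed

lemma wvec_notin_range_I_minus: "wvec \<notin> range (I_minus d)"
proof
  assume "wvec \<in> range (I_minus d)"
  then obtain t where t: "wvec = I_minus d t"
    by blast
  then have "t \<noteq> 0"
    by (auto simp: wvec_def)
  then obtain N a where N: "deg_le t N" and a: "a \<in> keys t" "total_deg a = N"
    and max: "\<forall>b\<in>keys t. total_deg b = N \<longrightarrow> lookup b x0 \<le> lookup a x0"
    by (rule exists_leading_monomial)
  have "\<forall>b\<in>keys t. total_deg b = N \<longrightarrow> lookup b x0 < lookup (a + vmono x0) x0"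
    using max by (simp add: lookup_add_vmono less_Suc_eq_le)
  then have "lookup (I_minus d t) (a + vmono x0) = mu j0 * lookup t a"
    using a lookup_I_minus_above[OF N] lookup_ell_mul_leading[OF N] by simp
  moreover have "lookup wvec (a + vmono x0) = 0"
    using total_deg_eq_0_iff[of "a + vmono x0"] by (auto simp: wvec_def Poly_Mapping.lookup_one)
  ultimately show False
    using t a mu_j0 by (simp add: Poly_Mapping.in_keys_iff)
qed

lemma leading_form_avoids_lower_Cs:
  assumes r: "leading_form_avoids x0 r (Suc N)"
    and a: "a \<in> keys r" "total_deg a = Suc N" "0 < lookup a (Cs k)"
  shows "leading_form_avoids x0 (E (- int k) (int j0) r - wscale (lam k * mu j0) r) N"
proof -
  let ?r' = "E (- int k) (int j0) r - wscale (lam k * mu j0) r"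
  have deg: "deg_le r (Suc N)" and top: "\<forall>a\<in>keys r. total_deg a = Suc N \<longrightarrow> lookup a x0 = 0"
    using r by (simp_all add: leading_form_avoids_def)
  have r': "?r' = wscale (mu j0) (wder (Cs k) r) - wscale (lam k) (wder x0 r) - wder (Cs k) (wder x0 r)"
    by (rule opE_annihilation[OF j0_pos])
  have "deg_le ?r' N"
    unfolding r' using deg_le_wder[OF deg] deg_le_wder[OF deg_le_mono[OF deg_le_wder[OF deg]]]
    by (intro deg_le_diff deg_le_wscale) simp_all
  moreover have "lookup ?r' b = mu j0 * of_nat (lookup b (Cs k) + 1) * lookup r (b + vmono (Cs k))"
    if "total_deg b = N" for b
    using lookup_wder_wder_eq_zero[OF deg that] lookup_add_vmono_eq_zero[OF top that]
    unfolding r' by (simp add: Poly_Mapping.lookup_minus lookup_wder)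
  ultimately show ?thesis
    using mu_j0 by (rule leading_form_avoids_lower[OF r a])
qed

lemma leading_form_avoids_lower_Cr:
  assumes r: "leading_form_avoids x0 r (Suc N)"
    and top_y0: "\<forall>a\<in>keys r. total_deg a = Suc N \<longrightarrow> lookup a y0 = 0"
    and a: "a \<in> keys r" "total_deg a = Suc N" "0 < lookup a (Cr k)"
  shows "leading_form_avoids x0 (E (- int i0) (int (k + 1)) r - wscale (lam i0 * mu (k + 1)) r) N"
proof -
  let ?r' = "E (- int i0) (int (k + 1)) r - wscale (lam i0 * mu (k + 1)) r"
  have deg: "deg_le r (Suc N)"
    using r by (simp add: leading_form_avoids_def)
  have r': "?r' = wscale (mu (k + 1)) (wder y0 r) - wscale (lam i0) (wder (Cr k) r) - wder y0 (wder (Cr k) r)"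
    using opE_annihilation[of "k + 1"] by simp
  have "deg_le ?r' N"
    unfolding r' using deg_le_wder[OF deg] deg_le_wder[OF deg_le_mono[OF deg_le_wder[OF deg]]]
    by (intro deg_le_diff deg_le_wscale) simp_all
  moreover have "lookup ?r' b = - lam i0 * of_nat (lookup b (Cr k) + 1) * lookup r (b + vmono (Cr k))"
    if "total_deg b = N" for b
    using lookup_wder_wder_eq_zero[OF deg that] lookup_add_vmono_eq_zero[OF top_y0 that]
    unfolding r' by (simp add: Poly_Mapping.lookup_minus lookup_wder)
  moreover have "- lam i0 \<noteq> 0"
    using lam_i0 by simp
  ultimately show ?thesis
    by (rule leading_form_avoids_lower[OF r a])
qed

lemma wvec_in_invariant_subspace:
  assumes U: "wsubspace U" "E_invariant lam mu U"
  shows "r \<in> U \<Longrightarrow> leading_form_avoids x0 r N \<Longrightarrow> wvec \<in> U"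
proof (induction N arbitrary: r)
  case 0
  then have r: "r = wscale (lookup r 0) wvec" and "r \<noteq> 0"
    using deg_le_0_eq_wscale_wvec by (auto simp: leading_form_avoids_def)
  then have "lookup r 0 \<noteq> 0"
    by (metis wscale_zero_left)
  with r \<open>r \<in> U\<close> show ?case
    using wsubspace_cancel[OF U(1)] wsubspace_zero[OF U(1)] by (metis add.right_neutral)
next
  case (Suc N)
  have lower: "E i j r - wscale c r \<in> U" for i j c
    using U Suc.prems(1) by (intro wsubspace_diff wsubspace_wscale E_invariantD)
  show ?case
  proof (cases "\<exists>a\<in>keys r. total_deg a = Suc N \<and> (\<exists>k. 0 < lookup a (Cs k))")
    case True
    then obtain a k where "a \<in> keys r" "total_deg a = Suc N" "0 < lookup a (Cs k)"
      by blast
    with Suc.prems(2) show ?thesis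
      by (intro Suc.IH[OF lower]) (rule leading_form_avoids_lower_Cs)
  next
    case False
    then have top_y0: "\<forall>a\<in>keys r. total_deg a = Suc N \<longrightarrow> lookup a y0 = 0"
      by auto
    obtain a where a: "a \<in> keys r" "total_deg a = Suc N"
      using Suc.prems(2) by (auto simp: leading_form_avoids_def)
    then have "a \<noteq> 0"
      using total_deg_eq_0_iff[of a] by auto
    then obtain g where "0 < lookup a g"
      using exists_var_if_nonzero by blast
    with False a obtain k where "0 < lookup a (Cr k)"
      by (cases g) auto
    with Suc.prems(2) top_y0 a show ?thesis
      by (intro Suc.IH[OF lower]) (rule leading_form_avoids_lower_Cr)
  qed
qed

lemma reduce_leading_x0_exponent:
  assumes v: "deg_le v (Suc N)" "\<forall>a\<in>keys v. total_deg a = Suc N \<longrightarrow> lookup a x0 \<le> Suc M"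
  obtains t where "deg_le (v - I_minus d t) (Suc N)"
    "\<forall>a\<in>keys (v - I_minus d t). total_deg a = Suc N \<longrightarrow> lookup a x0 \<le> M"
proof -
  obtain t where t: "deg_le t N"
    and lookup_t: "\<And>b. total_deg b = N \<Longrightarrow> lookup t b = lookup v (b + vmono x0) / mu j0"
    using exists_leading_quotient[where N = N and v = v and g = x0 and c = "mu j0"] by blast
  have t_top: "\<forall>b\<in>keys t. total_deg b = N \<longrightarrow> lookup b x0 \<le> M"
  proof (intro ballI impI)
    fix b assume "b \<in> keys t" "total_deg b = N"
    then have "b + vmono x0 \<in> keys v"
      by (simp add: Poly_Mapping.in_keys_iff lookup_t)
    with \<open>total_deg b = N\<close> v(2) show "lookup b x0 \<le> M"
      by (auto simp: lookup_add_vmono)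
  qed
  show ?thesis
  proof (rule that)
    show "deg_le (v - I_minus d t) (Suc N)"
      using v(1) deg_le_I_minus[OF t] by (rule deg_le_diff)
    show "\<forall>a\<in>keys (v - I_minus d t). total_deg a = Suc N \<longrightarrow> lookup a x0 \<le> M"
    proof (intro ballI impI)
      fix a assume a: "a \<in> keys (v - I_minus d t)" "total_deg a = Suc N"
      show "lookup a x0 \<le> M"
      proof (rule ccontr)
        assume "\<not> lookup a x0 \<le> M"
        then have x0: "0 < lookup a x0"
          and "\<forall>b\<in>keys t. total_deg b = N \<longrightarrow> lookup b x0 < lookup a x0"
          using t_top by auto
        then have "lookup (I_minus d t) a = mu j0 * lookup t (a - vmono x0)"
          using a(2) lookup_I_minus_above[OF t] lookup_ell_mul_leading[OF t] by simp
        also have "\<dots> = lookup v a"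
          using a(2) total_deg_diff_vmono[OF x0] diff_vmono_add[OF x0] mu_j0 by (simp add: lookup_t)
        finally show False
          using a(1) by (simp add: Poly_Mapping.in_keys_iff Poly_Mapping.lookup_minus)
      qed
    qed
  qed
qed

lemma reduce_top_degree:
  assumes IH: "\<And>v. v \<notin> range (I_minus d) \<Longrightarrow> deg_le v N \<Longrightarrow>
      \<exists>t N'. leading_form_avoids x0 (v - I_minus d t) N'"
  shows "v \<notin> range (I_minus d) \<Longrightarrow> deg_le v (Suc N) \<Longrightarrow>
      \<forall>a\<in>keys v. total_deg a = Suc N \<longrightarrow> lookup a x0 \<le> M \<Longrightarrow>
      \<exists>t N'. leading_form_avoids x0 (v - I_minus d t) N'"
proof (induction M arbitrary: v)
  case 0
  show ?case
  proof (cases "\<exists>a\<in>keys v. total_deg a = Suc N")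
    case True
    with 0 have "leading_form_avoids x0 (v - I_minus d 0) (Suc N)"
      by (simp add: leading_form_avoids_def)
    then show ?thesis
      by blast
  next
    case False
    with 0 have "deg_le v N"
      by (auto simp: deg_le_def le_Suc_eq)
    then show ?thesis
      using IH 0(1) by blast
  qed
next
  case (Suc M)
  obtain t where t: "deg_le (v - I_minus d t) (Suc N)"
    "\<forall>a\<in>keys (v - I_minus d t). total_deg a = Suc N \<longrightarrow> lookup a x0 \<le> M"
    using reduce_leading_x0_exponent[OF Suc.prems(2,3)] by blast
  have "v - I_minus d t \<notin> range (I_minus d)"
    using Suc.prems(1) by (rule diff_I_minus_notin_range)
  then obtain t' N' where "leading_form_avoids x0 (v - I_minus d t - I_minus d t') N'"
    using Suc.IH t by blast
  then have "leading_form_avoids x0 (v - I_minus d (t + t')) N'"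
    by (simp add: I_minus_add diff_diff_eq)
  then show ?case
    by blast
qed

lemma exists_leading_form_avoids:
  assumes "v \<notin> range (I_minus d)"
  shows "\<exists>t N. leading_form_avoids x0 (v - I_minus d t) N"
proof -
  have "v \<notin> range (I_minus d) \<Longrightarrow> deg_le v N \<Longrightarrow>
      \<exists>t N'. leading_form_avoids x0 (v - I_minus d t) N'"
    for v N
  proof (induction N arbitrary: v)
    case 0
    then have "v \<noteq> 0"
      using I_minus_zero by (metis rangeI)
    then have "keys v \<noteq> {}"
      by simp
    then obtain a where "a \<in> keys v"
      by blast
    with 0 have "leading_form_avoids x0 (v - I_minus d 0) 0"
      by (auto simp: leading_form_avoids_def deg_le_def total_deg_eq_0_iff)
    then show ?case
      by blast
  next
    case (Suc N)
    have "\<forall>a\<in>keys v. total_deg a = Suc N \<longrightarrow> lookup a x0 \<le> Suc N"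
      using lookup_le_total_deg[of _ x0] by metis
    then show ?case
      using reduce_top_degree[OF Suc.IH Suc.prems] by blast
  qed
  then show ?thesis
    using assms exists_deg_le by blast
qed

lemma quot_irreducible_gl_Nd: "quot_irreducible_gl lam mu (Nd lam mu d)"
  unfolding quot_irreducible_gl_def
proof (intro conjI allI impI)
  show "Nd lam mu d \<noteq> UNIV"
    using wvec_notin_range_I_minus Nd_eq_range_I_minus by blast
  fix U assume "wsubspace U \<and> Nd lam mu d \<subseteq> U \<and> E_invariant lam mu U"
  then have U: "wsubspace U" "E_invariant lam mu U" and Nd_U: "range (I_minus d) \<subseteq> U"
    by (simp_all add: Nd_eq_range_I_minus)
  show "U = Nd lam mu d \<or> U = UNIV"
  proof (cases "U = Nd lam mu d")
    case False
    then obtain v where "v \<in> U" "v \<notin> range (I_minus d)"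
      using Nd_U by (auto simp: Nd_eq_range_I_minus)
    then obtain t N where "leading_form_avoids x0 (v - I_minus d t) N"
      using exists_leading_form_avoids by blast
    moreover have "v - I_minus d t \<in> U"
      using U(1) \<open>v \<in> U\<close> Nd_U by (blast intro: wsubspace_diff)
    ultimately have "wvec \<in> U"
      using wvec_in_invariant_subspace[OF U] by blast
    with U show ?thesis
      using invariant_subspace_eq_UNIV by blast
  qed simp
qed

end

theorem theorem7p4:
  fixes n m :: nat and lam mu :: "nat \<Rightarrow> complex" and d :: complex
  assumes "m \<ge> 1"
    and "\<forall>i>n. lam i = 0"
    and "\<forall>j>m. mu j = 0"
    and "\<exists>i\<le>n. lam i \<noteq> 0"
    and "\<exists>j\<in>{1..m}. mu j \<noteq> 0"
  shows "quot_irreducible_gl lam mu (Nd lam mu d) \<and> quot_irreducible_W lam mu (Nd lam mu d)"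
proof -
  obtain i0 where "lam i0 \<noteq> 0"
    using assms(4) by blast
  moreover obtain j0 where "1 \<le> j0" "mu j0 \<noteq> 0"
    using assms(5) by auto
  ultimately interpret nondegenerate_whittaker lam mu n m i0 j0
    using assms(2,3) by unfold_locales
  show ?thesis
    using quot_irreducible_gl_Nd quot_irreducible_W_if_gl by blast
qed

end
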